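(* Let $\Gamma$ be a tetravalent graph admitting a subgroup $G\le\mathrm{Aut}(\Gamma)$ acting regularly on the arcs of $\Gamma$. If $\Gamma$ is the underlying graph of a map $\mathcal M$ in class $2_{\{0,1\}}$ with $\mathrm{Aut}(\mathcal M)=G$, then all orbits of $G$-consistent cycles of $\Gamma$ are $G$-symmetric. Moreover, if $G=\mathrm{Aut}(\Gamma)$ and all orbits of $G$-consistent cycles of $\Gamma$ are $G$-symmetric, then for any two orbits of $G$-consistent cycles of $\Gamma$ there exists a map $\mathcal M$ in class $2_{\{0,1\}}$ with $\mathrm{Aut}(\mathcal M)=G$ and underlying graph $\Gamma$ whose face boundaries are exactly the members of these two orbits.
   Context: A map is a $2$-cell embedding of a connected simple graph (its underlying graph) in a closed surface; the components of the complement are the faces. All maps considered are polytopal: flags correspond bijectively to incident triples (vertex, edge, face). For a flag $\Phi$ and $i\in\{0,1,2\}$, $\Phi^i$ is the unique flag differing from $\Phi$ exactly in its vertex ($i=0$), edge ($i=1$) or face ($i=2$). $\mathrm{Aut}(\mathcal M)$ is the group of automorphisms of the underlying graph preserving the set of faces, acting on flags. A map is in class $2_{\{0,1\}}$ if $\mathrm{Aut}(\mathcal M)$ has exactly two orbits on flags and for every flag $\Phi$, the flags $\Phi^0,\Phi^1$ lie in the orbit of $\Phi$ while $\Phi^2$ does not. For an arc-transitive $G\le\mathrm{Aut}(\Gamma)$, a directed cycle $(v_0,\ldots,v_{r-1})$ is $G$-consistent if some $g\in G$ maps each $v_i$ to $v_{i+1}$ (indices mod $r$); an undirected cycle is $G$-consistent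 if both orientations are; it is $G$-symmetric if moreover some element of $G$ maps one orientation to the other. $G$ acts on the set of $G$-consistent cycles, giving orbits of $G$-consistent cycles. *)

theory Defs
  imports "HOL-Combinatorics.Permutations"
begin

definition simple_graph :: "'a set \<Rightarrow> ('a \<Rightarrow> 'a \<Rightarrow> bool) \<Rightarrow> bool" where
  "simple_graph V E \<longleftrightarrow> finite V \<and> (\<forall>u w. E u w \<longrightarrow> u \<in> V \<and> w \<in> V)
     \<and> (\<forall>u w. E u w \<longrightarrow> E w u) \<and> (\<forall>u. \<not> E u u)"

definition connected_graph :: "'a set \<Rightarrow> ('a \<Rightarrow> 'a \<Rightarrow> bool) \<Rightarrow> bool" where
  "connected_graph V E \<longleftrightarrow> V \<noteq> {} \<and> (\<forall>u\<in>V. \<forall>w\<in>V. (u, w) \<in> {(x, y). E x y}\<^sup>*)"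

definition tetravalent :: "'a set \<Rightarrow> ('a \<Rightarrow> 'a \<Rightarrow> bool) \<Rightarrow> bool" where
  "tetravalent V E \<longleftrightarrow> (\<forall>v\<in>V. card {w\<in>V. E v w} = 4)"

definition is_edge :: "('a \<Rightarrow> 'a \<Rightarrow> bool) \<Rightarrow> 'a set \<Rightarrow> bool" where
  "is_edge E e \<longleftrightarrow> (\<exists>u w. E u w \<and> e = {u, w})"

definition arcs :: "('a \<Rightarrow> 'a \<Rightarrow> bool) \<Rightarrow> ('a \<times> 'a) set" where
  "arcs E = {(u, w). E u w}"

definition graph_aut :: "'a set \<Rightarrow> ('a \<Rightarrow> 'a \<Rightarrow> bool) \<Rightarrow> ('a \<Rightarrow> 'a) set" where
  "graph_aut V E = {g. g permutes V \<and> (\<forall>x\<in>V. \<forall>y\<in>V. E x y \<longleftrightarrow> E (g x) (g y))}"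

definition perm_subgroup :: "'a set \<Rightarrow> ('a \<Rightarrow> 'a \<Rightarrow> bool) \<Rightarrow> ('a \<Rightarrow> 'a) set \<Rightarrow> bool" where
  "perm_subgroup V E G \<longleftrightarrow> G \<subseteq> graph_aut V E \<and> id \<in> G
     \<and> (\<forall>g\<in>G. \<forall>h\<in>G. g \<circ> h \<in> G) \<and> (\<forall>g\<in>G. inv g \<in> G)"

definition arc_regular :: "('a \<Rightarrow> 'a \<Rightarrow> bool) \<Rightarrow> ('a \<Rightarrow> 'a) set \<Rightarrow> bool" where
  "arc_regular E G \<longleftrightarrow>
     (\<forall>a\<in>arcs E. \<forall>b\<in>arcs E. \<exists>!g. g \<in> G \<and> (g (fst a), g (snd a)) = b)"

definition is_cycle_list :: "('a \<Rightarrow> 'a \<Rightarrow> bool) \<Rightarrow> 'a list \<Rightarrow> bool" where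
  "is_cycle_list E vs \<longleftrightarrow> length vs \<ge> 3 \<and> distinct vs
     \<and> (\<forall>i<length vs. E (vs ! i) (vs ! (Suc i mod length vs)))"

definition dcycle_of :: "'a list \<Rightarrow> ('a \<times> 'a) set" where
  "dcycle_of vs = {(vs ! i, vs ! (Suc i mod length vs)) | i. i < length vs}"

definition dcycle :: "('a \<Rightarrow> 'a \<Rightarrow> bool) \<Rightarrow> ('a \<times> 'a) set \<Rightarrow> bool" where
  "dcycle E D \<longleftrightarrow> (\<exists>vs. is_cycle_list E vs \<and> D = dcycle_of vs)"

definition ucycle_of :: "('a \<times> 'a) set \<Rightarrow> 'a set set" where
  "ucycle_of D = {{u, w} | u w. (u, w) \<in> D}"

definition ucycle :: "('a \<Rightarrow> 'a \<Rightarrow> bool) \<Rightarrow> 'a set set \<Rightarrow> bool" where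
  "ucycle E C \<longleftrightarrow> (\<exists>D. dcycle E D \<and> C = ucycle_of D)"

definition orientation :: "('a \<Rightarrow> 'a \<Rightarrow> bool) \<Rightarrow> ('a \<times> 'a) set \<Rightarrow> 'a set set \<Rightarrow> bool" where
  "orientation E D C \<longleftrightarrow> dcycle E D \<and> ucycle_of D = C"

definition consistent_dcycle :: "('a \<Rightarrow> 'a) set \<Rightarrow> ('a \<times> 'a) set \<Rightarrow> bool" where
  "consistent_dcycle G D \<longleftrightarrow> (\<exists>g\<in>G. \<forall>(u, w)\<in>D. g u = w)"

definition consistent_cycle :: "('a \<Rightarrow> 'a \<Rightarrow> bool) \<Rightarrow> ('a \<Rightarrow> 'a) set \<Rightarrow> 'a set set \<Rightarrow> bool" where
  "consistent_cycle E G C \<longleftrightarrow> ucycle E C \<and> (\<forall>D. orientation E D C \<longrightarrow> consistent_dcycle G D)"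

definition arc_img :: "('a \<Rightarrow> 'a) \<Rightarrow> ('a \<times> 'a) set \<Rightarrow> ('a \<times> 'a) set" where
  "arc_img g D = (\<lambda>(u, w). (g u, g w)) ` D"

definition symmetric_cycle :: "('a \<Rightarrow> 'a \<Rightarrow> bool) \<Rightarrow> ('a \<Rightarrow> 'a) set \<Rightarrow> 'a set set \<Rightarrow> bool" where
  "symmetric_cycle E G C \<longleftrightarrow> consistent_cycle E G C
     \<and> (\<exists>g\<in>G. \<exists>D. orientation E D C \<and> arc_img g D = D\<inverse>)"

definition cyc_img :: "('a \<Rightarrow> 'a) \<Rightarrow> 'a set set \<Rightarrow> 'a set set" where
  "cyc_img g C = (\<lambda>e. g ` e) ` C"

definition cyc_orbit :: "('a \<Rightarrow> 'a) set \<Rightarrow> 'a set set \<Rightarrow> 'a set set set" where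
  "cyc_orbit G C = {cyc_img g C | g. g \<in> G}"

definition cc_orbits :: "('a \<Rightarrow> 'a \<Rightarrow> bool) \<Rightarrow> ('a \<Rightarrow> 'a) set \<Rightarrow> 'a set set set set" where
  "cc_orbits E G = {cyc_orbit G C | C. consistent_cycle E G C}"

definition symmetric_orbit :: "('a \<Rightarrow> 'a \<Rightarrow> bool) \<Rightarrow> ('a \<Rightarrow> 'a) set \<Rightarrow> 'a set set set \<Rightarrow> bool" where
  "symmetric_orbit E G Orb \<longleftrightarrow> (\<forall>C\<in>Orb. symmetric_cycle E G C)"

text \<open>A polytopal map with underlying graph (V,E) is given by its set F of faces,
  each face identified with its boundary, which is a cycle of the graph (edge set);
  every edge lies on exactly two faces, and at every vertex the faces around it
  link all incident edges into one cycle (so the surface is a closed surface).\<close>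
definition polytopal_map :: "'a set \<Rightarrow> ('a \<Rightarrow> 'a \<Rightarrow> bool) \<Rightarrow> 'a set set set \<Rightarrow> bool" where
  "polytopal_map V E F \<longleftrightarrow> simple_graph V E \<and> connected_graph V E
     \<and> (\<forall>f\<in>F. ucycle E f)
     \<and> (\<forall>e. is_edge E e \<longrightarrow> card {f\<in>F. e \<in> f} = 2)
     \<and> (\<forall>v\<in>V. \<forall>e e'. is_edge E e \<and> v \<in> e \<and> is_edge E e' \<and> v \<in> e' \<longrightarrow>
          (e, e') \<in> {(x, y). is_edge E x \<and> v \<in> x \<and> is_edge E y \<and> v \<in> y
                       \<and> (\<exists>f\<in>F. x \<in> f \<and> y \<in> f)}\<^sup>*)"

definition flags :: "'a set \<Rightarrow> ('a \<Rightarrow> 'a \<Rightarrow> bool) \<Rightarrow> 'a set set set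
                     \<Rightarrow> ('a \<times> 'a set \<times> 'a set set) set" where
  "flags V E F = {(v, e, f). v \<in> V \<and> is_edge E e \<and> f \<in> F \<and> v \<in> e \<and> e \<in> f}"

definition map_aut :: "'a set \<Rightarrow> ('a \<Rightarrow> 'a \<Rightarrow> bool) \<Rightarrow> 'a set set set \<Rightarrow> ('a \<Rightarrow> 'a) set" where
  "map_aut V E F = {g \<in> graph_aut V E. cyc_img g ` F = F}"

definition flag_act :: "('a \<Rightarrow> 'a) \<Rightarrow> ('a \<times> 'a set \<times> 'a set set) \<Rightarrow> ('a \<times> 'a set \<times> 'a set set)" where
  "flag_act g \<Phi> = (case \<Phi> of (v, e, f) \<Rightarrow> (g v, g ` e, cyc_img g f))"

definition flag_orbit :: "('a \<Rightarrow> 'a) set \<Rightarrow> ('a \<times> 'a set \<times> 'a set set)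
                          \<Rightarrow> ('a \<times> 'a set \<times> 'a set set) set" where
  "flag_orbit A \<Phi> = {flag_act g \<Phi> | g. g \<in> A}"

definition flag_adj :: "nat \<Rightarrow> ('a \<times> 'a set \<times> 'a set set) \<Rightarrow> ('a \<times> 'a set \<times> 'a set set) \<Rightarrow> bool" where
  "flag_adj i \<Phi> \<Psi> = (case \<Phi> of (v, e, f) \<Rightarrow> case \<Psi> of (v', e', f') \<Rightarrow>
      (i = 0 \<and> v \<noteq> v' \<and> e = e' \<and> f = f') \<or>
      (i = 1 \<and> v = v' \<and> e \<noteq> e' \<and> f = f') \<or>
      (i = 2 \<and> v = v' \<and> e = e' \<and> f \<noteq> f'))"

definition class_2_01 :: "'a set \<Rightarrow> ('a \<Rightarrow> 'a \<Rightarrow> bool) \<Rightarrow> 'a set set set \<Rightarrow> bool" where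
  "class_2_01 V E F \<longleftrightarrow>
     card {flag_orbit (map_aut V E F) \<Phi> | \<Phi>. \<Phi> \<in> flags V E F} = 2
     \<and> (\<forall>\<Phi>\<in>flags V E F. \<forall>\<Psi>\<in>flags V E F.
          (flag_adj 0 \<Phi> \<Psi> \<longrightarrow> \<Psi> \<in> flag_orbit (map_aut V E F) \<Phi>)
        \<and> (flag_adj 1 \<Phi> \<Psi> \<longrightarrow> \<Psi> \<in> flag_orbit (map_aut V E F) \<Phi>)
        \<and> (flag_adj 2 \<Phi> \<Psi> \<longrightarrow> \<Psi> \<notin> flag_orbit (map_aut V E F) \<Phi>))"

end

(*
  Arc-regularity makes every G-consistent cycle the orbit of one of its vertices under a
  "rotation" r in G, determined by any arc of the cycle. Such a cycle is G-symmetric as soon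
  as some k in G fixes a vertex of it and swaps its two neighbours on the cycle: k conjugates
  r to its inverse and therefore reverses the cycle.

  In a map of class 2_{0,1} with automorphism group G, the 1-adjacent flags at a vertex v and
  a face f are equivalent, so G swaps the two edges of f at v. The two faces through an edge
  va give two such swaps at v; as v has four neighbours and its link is connected, their
  products swap any two neighbours of v, and all consistent cycles are symmetric.

  Conversely, the stabiliser of a symmetric consistent cycle is transitive on its arcs in
  both directions. Hence two cycles of one orbit sharing an edge coincide, and every edge lies
  on exactly one cycle of each of two given orbits. Since a consistent cycle is determined by
  a 2-arc, the two faces at an edge continue along different edges at each end, which makes
  every vertex link connected. Arc-transitivity of the face stabilisers makes 0- and
  1-adjacent flags equivalent, whereas an automorphism fixing a vertex and an edge is trivial,
  so 2-adjacent flags are not, and there are exactly two flag orbits.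
*)

theory Submission
  imports Defs
begin

lemma dcycle_of_iff:
  "(x, y) \<in> dcycle_of vs \<longleftrightarrow> (\<exists>i<length vs. x = vs ! i \<and> y = vs ! (Suc i mod length vs))"
  unfolding dcycle_of_def by auto

lemma Suc_mod_eq_if: "i < n \<Longrightarrow> Suc i mod n = (if Suc i = n then 0 else Suc i)"
  by auto

lemma Suc_mod_less: "i < n \<Longrightarrow> Suc i mod n < n"
  by (simp add: Suc_mod_eq_if)

lemma dcycle_of_right_unique:
  assumes "distinct vs" "(x, y) \<in> dcycle_of vs" "(x, y') \<in> dcycle_of vs"
  shows "y = y'"
  using assms by (auto simp: dcycle_of_iff nth_eq_iff_index_eq)

lemma dcycle_of_left_unique:
  assumes "distinct vs" "(x, y) \<in> dcycle_of vs" "(x', y) \<in> dcycle_of vs"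
  shows "x = x'"
proof -
  from assms obtain i j where i: "i < length vs" "x = vs ! i" "y = vs ! (Suc i mod length vs)"
    and j: "j < length vs" "x' = vs ! j" "y = vs ! (Suc j mod length vs)"
    by (auto simp: dcycle_of_iff)
  have "Suc i mod length vs < length vs" "Suc j mod length vs < length vs"
    using i(1) j(1) by (simp_all add: Suc_mod_less)
  then have "Suc i mod length vs = Suc j mod length vs"
    using i j assms(1) by (simp add: nth_eq_iff_index_eq)
  then have "i = j" using i(1) j(1) by (simp add: Suc_mod_eq_if split: if_splits)
  then show ?thesis using i j by simp
qed

lemma dcycle_of_asym:
  assumes "length vs \<ge> 3" "distinct vs" "(x, y) \<in> dcycle_of vs"
  shows "(y, x) \<notin> dcycle_of vs"
proof
  assume "(y, x) \<in> dcycle_of vs"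
  with assms obtain i j where i: "i < length vs" "x = vs ! i" "y = vs ! (Suc i mod length vs)"
    and j: "j < length vs" "y = vs ! j" "x = vs ! (Suc j mod length vs)"
    by (auto simp: dcycle_of_iff)
  have "Suc i mod length vs < length vs" "Suc j mod length vs < length vs"
    using i(1) j(1) by (simp_all add: Suc_mod_less)
  then have "j = Suc i mod length vs" "i = Suc j mod length vs"
    using i j assms(2) by (simp_all add: nth_eq_iff_index_eq)
  then show False using i(1) j(1) assms(1) by (simp add: Suc_mod_eq_if split: if_splits)
qed

lemma Domain_dcycle_of: "Domain (dcycle_of vs) = set vs"
proof
  show "Domain (dcycle_of vs) \<subseteq> set vs" by (auto simp: dcycle_of_iff)
  show "set vs \<subseteq> Domain (dcycle_of vs)"
  proof
    fix x assume "x \<in> set vs"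
    then obtain i where "i < length vs" "x = vs ! i" by (auto simp: in_set_conv_nth)
    then show "x \<in> Domain (dcycle_of vs)" unfolding Domain_iff dcycle_of_iff by blast
  qed
qed

lemma Range_dcycle_of: "Range (dcycle_of vs) = set vs"
proof -
  have "vs ! i \<in> Range (dcycle_of vs)" if "i < length vs" for i
  proof -
    define k where "k = (if i = 0 then length vs - 1 else i - 1)"
    have "k < length vs" "Suc k mod length vs = i"
      using that unfolding k_def by (auto simp: Suc_mod_eq_if)
    then show ?thesis unfolding dcycle_of_def by force
  qed
  moreover have "Range (dcycle_of vs) \<subseteq> set vs" by (auto simp: dcycle_of_iff Suc_mod_less)
  ultimately show ?thesis by (auto simp: in_set_conv_nth)
qed

lemma dcycle_of_rev_subset: "dcycle_of (rev vs) \<subseteq> (dcycle_of vs)\<inverse>"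
proof clarify
  fix a b assume "(a, b) \<in> dcycle_of (rev vs)"
  then obtain k where k: "k < length vs" "a = rev vs ! k" "b = rev vs ! (Suc k mod length vs)"
    by (auto simp: dcycle_of_iff)
  define n where "n = length vs"
  define i where "i = n - 1 - Suc k mod n"
  have "Suc k mod n < n" using k(1) unfolding n_def by (rule Suc_mod_less)
  then have "i < n" "Suc i mod n = n - Suc k"
    using k(1) unfolding i_def n_def by (auto simp: Suc_mod_eq_if)
  moreover have "b = vs ! i" "a = vs ! (n - Suc k)"
    using k \<open>Suc k mod n < n\<close> unfolding i_def n_def by (auto simp: rev_nth)
  ultimately show "(b, a) \<in> dcycle_of vs" unfolding dcycle_of_iff n_def by metis
qed

lemma dcycle_of_rev: "dcycle_of (rev vs) = (dcycle_of vs)\<inverse>"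
  using dcycle_of_rev_subset[of vs] dcycle_of_rev_subset[of "rev vs"] by auto

lemma arc_img_iff: "(a, b) \<in> arc_img g D \<longleftrightarrow> (\<exists>x y. (x, y) \<in> D \<and> a = g x \<and> b = g y)"
  unfolding arc_img_def by auto

lemma dcycle_of_map: "dcycle_of (map g vs) = arc_img g (dcycle_of vs)"
proof (rule set_eqI, clarify)
  fix a b
  have "(a, b) \<in> dcycle_of (map g vs) \<longleftrightarrow>
      (\<exists>i<length vs. a = g (vs ! i) \<and> b = g (vs ! (Suc i mod length vs)))"
    by (auto simp: dcycle_of_iff Suc_mod_less)
  then show "(a, b) \<in> dcycle_of (map g vs) \<longleftrightarrow> (a, b) \<in> arc_img g (dcycle_of vs)"
    unfolding arc_img_iff dcycle_of_iff by blast
qed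

definition rotates :: "('a \<Rightarrow> 'a) \<Rightarrow> ('a \<times> 'a) set \<Rightarrow> bool" where
  "rotates r D \<longleftrightarrow> (\<forall>(x, y)\<in>D. r x = y)"

lemma dcycle_of_funpow:
  assumes "rotates r (dcycle_of vs)" "i < length vs"
  shows "vs ! ((i + m) mod length vs) = (r ^^ m) (vs ! i)"
proof (induction m)
  case (Suc m)
  have "(i + m) mod length vs < length vs" by (rule mod_less_divisor) (use assms(2) in linarith)
  then have "(vs ! ((i + m) mod length vs), vs ! (Suc ((i + m) mod length vs) mod length vs))
      \<in> dcycle_of vs"
    unfolding dcycle_of_iff by blast
  then have "vs ! (Suc ((i + m) mod length vs) mod length vs) = r (vs ! ((i + m) mod length vs))"
    using assms(1) unfolding rotates_def by auto
  then show ?case using Suc by (simp add: mod_Suc_eq)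
qed (use assms in simp)

lemma set_eq_funpow_range:
  assumes "rotates r (dcycle_of vs)" "x \<in> set vs"
  shows "set vs = range (\<lambda>m. (r ^^ m) x)"
proof
  obtain i where i: "i < length vs" "x = vs ! i" using assms(2) by (auto simp: in_set_conv_nth)
  show "set vs \<subseteq> range (\<lambda>m. (r ^^ m) x)"
  proof
    fix y assume "y \<in> set vs"
    then obtain j where j: "j < length vs" "y = vs ! j" by (auto simp: in_set_conv_nth)
    have "(i + (j + length vs - i)) mod length vs = j" using i(1) j(1) by simp
    then have "y = (r ^^ (j + length vs - i)) x"
      using dcycle_of_funpow[OF assms(1) i(1)] i(2) j(2) by metis
    then show "y \<in> range (\<lambda>m. (r ^^ m) x)" by blast
  qed
  show "range (\<lambda>m. (r ^^ m) x) \<subseteq> set vs"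
  proof clarify
    fix m
    have "(i + m) mod length vs < length vs" by (rule mod_less_divisor) (use i(1) in linarith)
    then show "(r ^^ m) x \<in> set vs" using dcycle_of_funpow[OF assms(1) i(1)] i(2) by (metis nth_mem)
  qed
qed

lemma rotatesD: "rotates r D \<Longrightarrow> (x, y) \<in> D \<Longrightarrow> r x = y"
  unfolding rotates_def by auto

lemma rotates_iff:
  assumes "rotates r D" shows "(x, y) \<in> D \<longleftrightarrow> x \<in> Domain D \<and> y = r x"
  using assms unfolding rotates_def by auto

lemma rotates_converse: "inj r \<Longrightarrow> rotates r D \<Longrightarrow> rotates (inv r) (D\<inverse>)"
  unfolding rotates_def by auto

lemma rotates_arc_img: "inj g \<Longrightarrow> rotates r D \<Longrightarrow> rotates (g \<circ> r \<circ> inv g) (arc_img g D)"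
  unfolding rotates_def arc_img_def by auto

lemma consistent_dcycle_iff: "consistent_dcycle G D \<longleftrightarrow> (\<exists>r\<in>G. rotates r D)"
  unfolding consistent_dcycle_def rotates_def ..

lemma is_cycle_list_iff:
  "is_cycle_list E vs \<longleftrightarrow> length vs \<ge> 3 \<and> distinct vs \<and> (\<forall>(x, y)\<in>dcycle_of vs. E x y)"
  unfolding is_cycle_list_def dcycle_of_def by auto

lemma dcycleE:
  assumes "dcycle E D"
  obtains vs where "length vs \<ge> 3" "distinct vs" "D = dcycle_of vs" "\<forall>(x, y)\<in>D. E x y"
  using assms unfolding dcycle_def is_cycle_list_iff by blast

lemma dcycle_edge: "dcycle E D \<Longrightarrow> (x, y) \<in> D \<Longrightarrow> E x y"
  by (erule dcycleE) blast

lemma dcycle_right_unique: "dcycle E D \<Longrightarrow> (x, y) \<in> D \<Longrightarrow> (x, y') \<in> D \<Longrightarrow> y = y'"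
  by (erule dcycleE) (auto intro: dcycle_of_right_unique)

lemma dcycle_left_unique: "dcycle E D \<Longrightarrow> (x, y) \<in> D \<Longrightarrow> (x', y) \<in> D \<Longrightarrow> x = x'"
  by (erule dcycleE) (auto intro: dcycle_of_left_unique)

lemma dcycle_asym: "dcycle E D \<Longrightarrow> (x, y) \<in> D \<Longrightarrow> (y, x) \<notin> D"
  by (erule dcycleE) (auto dest: dcycle_of_asym)

lemma dcycle_Domain_eq_Range: "dcycle E D \<Longrightarrow> Domain D = Range D"
  by (erule dcycleE) (simp add: Domain_dcycle_of Range_dcycle_of)

lemma dcycle_nonempty: "dcycle E D \<Longrightarrow> \<exists>x y. (x, y) \<in> D"
proof (erule dcycleE)
  fix vs assume "length vs \<ge> 3" "D = dcycle_of vs"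
  then show ?thesis
    using Domain_dcycle_of[of vs] by (metis Domain_iff nth_mem le0 less_le_trans zero_less_numeral)
qed

lemma dcycle_Domain_funpow:
  "dcycle E D \<Longrightarrow> rotates r D \<Longrightarrow> x \<in> Domain D \<Longrightarrow> Domain D = range (\<lambda>m. (r ^^ m) x)"
  by (erule dcycleE) (metis Domain_dcycle_of set_eq_funpow_range)

lemma dcycle_eq_if_rotates:
  assumes "dcycle E D" "dcycle E D'" "rotates r D" "rotates r D'" "x \<in> Domain D" "x \<in> Domain D'"
  shows "D = D'"
  using dcycle_Domain_funpow[OF assms(1,3,5)] dcycle_Domain_funpow[OF assms(2,4,6)]
    rotates_iff[OF assms(3)] rotates_iff[OF assms(4)] by auto

lemma rotation_arc_transitive:
  assumes "dcycle E D" "rotates r D" "(x, y) \<in> D" "(s, t) \<in> D"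
  shows "\<exists>j. (r ^^ j) x = s \<and> (r ^^ j) y = t"
proof -
  have "s \<in> range (\<lambda>m. (r ^^ m) x)"
    using dcycle_Domain_funpow[OF assms(1,2), of x] assms(3,4) by blast
  then obtain j where "s = (r ^^ j) x" by blast
  moreover have "y = r x" "t = r s" using assms(2-4) unfolding rotates_def by auto
  ultimately show ?thesis by (auto simp: funpow_swap1)
qed

lemma dcycle_converse:
  assumes "\<And>x y. E x y \<Longrightarrow> E y x" "dcycle E D" shows "dcycle E (D\<inverse>)"
proof (rule dcycleE[OF assms(2)])
  fix vs assume "length vs \<ge> 3" "distinct vs" "D = dcycle_of vs" "\<forall>(x, y)\<in>D. E x y"
  then have "is_cycle_list E (rev vs)" "D\<inverse> = dcycle_of (rev vs)"
    using assms(1) by (auto simp: is_cycle_list_iff dcycle_of_rev)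
  then show ?thesis unfolding dcycle_def by blast
qed

lemma dcycle_arc_img:
  assumes "inj g" "\<And>x y. E x y \<Longrightarrow> E (g x) (g y)" "dcycle E D" shows "dcycle E (arc_img g D)"
proof (rule dcycleE[OF assms(3)])
  fix vs assume "length vs \<ge> 3" "distinct vs" "D = dcycle_of vs" "\<forall>(x, y)\<in>D. E x y"
  then have "is_cycle_list E (map g vs)" "arc_img g D = dcycle_of (map g vs)"
    using assms(1,2)
    by (fastforce simp: is_cycle_list_iff dcycle_of_map distinct_map inj_on_def arc_img_iff)+
  then show ?thesis unfolding dcycle_def by blast
qed

lemma ucycle_of_iff: "{v, p} \<in> ucycle_of D \<longleftrightarrow> (v, p) \<in> D \<or> (p, v) \<in> D"
  unfolding ucycle_of_def by (auto simp: doubleton_eq_iff)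

lemma ucycle_of_mem: "e \<in> ucycle_of D \<longleftrightarrow> (\<exists>u w. (u, w) \<in> D \<and> e = {u, w})"
  unfolding ucycle_of_def by blast

lemma ucycle_of_converse: "ucycle_of (D\<inverse>) = ucycle_of D"
proof -
  have "\<And>u w. {u, w} = {w, u}" by (rule insert_commute)
  then show ?thesis unfolding ucycle_of_def by blast
qed

lemma arc_img_comp: "arc_img (g \<circ> h) D = arc_img g (arc_img h D)"
  unfolding arc_img_def by force

lemma arc_img_id: "arc_img id D = D"
  unfolding arc_img_def by auto

lemma arc_img_converse: "arc_img g (D\<inverse>) = (arc_img g D)\<inverse>"
  unfolding arc_img_def by force

lemma cyc_img_comp: "cyc_img (g \<circ> h) C = cyc_img g (cyc_img h C)"
  unfolding cyc_img_def by (simp add: image_comp)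

lemma cyc_img_id: "cyc_img id C = C"
  unfolding cyc_img_def by auto

lemma ucycle_of_arc_img: "ucycle_of (arc_img g D) = cyc_img g (ucycle_of D)"
proof (rule set_eqI)
  fix e
  have "e \<in> cyc_img g (ucycle_of D) \<longleftrightarrow> (\<exists>u w. (u, w) \<in> D \<and> e = g ` {u, w})"
    unfolding cyc_img_def image_iff Bex_def ucycle_of_mem by blast
  then show "e \<in> ucycle_of (arc_img g D) \<longleftrightarrow> e \<in> cyc_img g (ucycle_of D)"
    unfolding ucycle_of_mem arc_img_iff by auto
qed

lemma ucycle_memE:
  assumes "ucycle E C" "e \<in> C"
  obtains u w where "e = {u, w}" "E u w"
proof -
  obtain D where D: "dcycle E D" "C = ucycle_of D" using assms(1) unfolding ucycle_def by blast
  then obtain u w where "(u, w) \<in> D" "e = {u, w}" using assms(2) by (auto simp: ucycle_of_mem)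
  then show ?thesis using that dcycle_edge[OF D(1)] by blast
qed

lemma ucycle_nonempty:
  assumes "ucycle E C" shows "\<exists>u w. {u, w} \<in> C"
proof -
  obtain D where D: "dcycle E D" "C = ucycle_of D" using assms unfolding ucycle_def by blast
  then obtain u w where "(u, w) \<in> D" using dcycle_nonempty by blast
  then show ?thesis using D(2) ucycle_of_iff by metis
qed

lemma ucycle_other_edge:
  assumes "ucycle E C" "{v, a} \<in> C" shows "\<exists>b. b \<noteq> a \<and> {v, b} \<in> C"
proof -
  obtain D where D: "dcycle E D" "C = ucycle_of D" using assms(1) unfolding ucycle_def by blast
  have "(v, a) \<in> D \<or> (a, v) \<in> D" using assms(2) D(2) ucycle_of_iff by metis
  then show ?thesis
  proof
    assume va: "(v, a) \<in> D"
    then obtain p where "(p, v) \<in> D" using dcycle_Domain_eq_Range[OF D(1)] by blast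
    moreover have "p \<noteq> a" using dcycle_asym[OF D(1) va] calculation by blast
    ultimately show ?thesis using D(2) ucycle_of_iff by metis
  next
    assume av: "(a, v) \<in> D"
    then obtain p where "(v, p) \<in> D" using dcycle_Domain_eq_Range[OF D(1)] by blast
    moreover have "p \<noteq> a" using dcycle_asym[OF D(1) av] calculation by blast
    ultimately show ?thesis using D(2) ucycle_of_iff by metis
  qed
qed

lemma ucycle_at_most_two_edges:
  assumes "ucycle E C" "{v, p} \<in> C" "{v, q} \<in> C" "{v, s} \<in> C"
  shows "p = q \<or> p = s \<or> q = s"
proof -
  obtain D where D: "dcycle E D" "C = ucycle_of D" using assms(1) unfolding ucycle_def by blast
  then have "(v, p) \<in> D \<or> (p, v) \<in> D" "(v, q) \<in> D \<or> (q, v) \<in> D" "(v, s) \<in> D \<or> (s, v) \<in> D"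
    using assms(2-4) ucycle_of_iff by metis+
  moreover have "y = y'" if "(v, y) \<in> D" "(v, y') \<in> D" for y y'
    using dcycle_right_unique[OF D(1) that] .
  moreover have "y = y'" if "(y, v) \<in> D" "(y', v) \<in> D" for y y'
    using dcycle_left_unique[OF D(1) that] .
  ultimately show ?thesis by metis
qed

section \<open>Arc-regular groups of automorphisms\<close>

locale arc_regular_action =
  fixes V :: "'a set" and E :: "'a \<Rightarrow> 'a \<Rightarrow> bool" and G :: "('a \<Rightarrow> 'a) set"
  assumes simple: "simple_graph V E" and subgroup: "perm_subgroup V E G"
    and regular: "arc_regular E G"
begin

lemma edge_sym: "E x y \<Longrightarrow> E y x"
  using simple unfolding simple_graph_def by blast

lemma edge_vertices: "E x y \<Longrightarrow> x \<in> V \<and> y \<in> V"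
  using simple unfolding simple_graph_def by blast

lemma edge_irrefl: "E x y \<Longrightarrow> x \<noteq> y"
  using simple unfolding simple_graph_def by blast

lemma is_edge_at_vertex:
  assumes "is_edge E e" "v \<in> e" obtains a where "e = {v, a}" "E v a"
proof -
  obtain x y where "E x y" "e = {x, y}" using assms(1) unfolding is_edge_def by blast
  then show ?thesis using that assms(2) edge_sym by (metis empty_iff insertE insert_commute)
qed

lemma tetravalent_neighbour_cases:
  assumes "tetravalent V E" "v \<in> V" "distinct [a, b, c, d]"
    and "E v a" "E v b" "E v c" "E v d" "E v x"
  shows "x \<in> {a, b, c, d}"
proof -
  have fin: "finite {w\<in>V. E v w}" using simple unfolding simple_graph_def by simp
  have "{a, b, c, d} \<subseteq> {w\<in>V. E v w}" using assms(4-7) edge_vertices by blast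
  moreover have "card {a, b, c, d} = card {w\<in>V. E v w}"
    using assms(1-3) unfolding tetravalent_def by simp
  ultimately have "{a, b, c, d} = {w\<in>V. E v w}" using card_subset_eq[OF fin] by blast
  then show ?thesis using assms(8) edge_vertices by blast
qed

lemma id_in_G: "id \<in> G"
  using subgroup unfolding perm_subgroup_def by blast

lemma comp_in_G: "g \<in> G \<Longrightarrow> h \<in> G \<Longrightarrow> g \<circ> h \<in> G"
  using subgroup unfolding perm_subgroup_def by blast

lemma inv_in_G: "g \<in> G \<Longrightarrow> inv g \<in> G"
  using subgroup unfolding perm_subgroup_def by blast

lemma funpow_in_G: "g \<in> G \<Longrightarrow> g ^^ n \<in> G"
  by (induction n) (auto simp: id_in_G comp_in_G)

lemma G_permutes: "g \<in> G \<Longrightarrow> g permutes V"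
  using subgroup unfolding perm_subgroup_def graph_aut_def by blast

lemma G_edge: "g \<in> G \<Longrightarrow> E x y \<Longrightarrow> E (g x) (g y)"
  using subgroup edge_vertices unfolding perm_subgroup_def graph_aut_def by blast

lemma G_inj: "g \<in> G \<Longrightarrow> inj g"
  using G_permutes permutes_inj by blast

lemma G_inv_apply: "g \<in> G \<Longrightarrow> inv g (g x) = x"
  using G_permutes permutes_inverses(2) by fastforce

lemma G_apply_inv: "g \<in> G \<Longrightarrow> g (inv g x) = x"
  using G_permutes permutes_inverses(1) by fastforce

lemma G_comp_inv: "g \<in> G \<Longrightarrow> g \<circ> inv g = id"
  using G_apply_inv by auto

lemma G_inv_comp: "g \<in> G \<Longrightarrow> inv g \<circ> g = id"
  using G_inv_apply by auto

lemma image_comp_right_G: "g \<in> G \<Longrightarrow> (\<lambda>h. h \<circ> g) ` G = G"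
  using comp_in_G inv_in_G G_inv_comp
  by (auto simp: image_iff comp_assoc intro!: bexI[of _ "_ \<circ> inv g"])

lemma image_comp_left_G: "g \<in> G \<Longrightarrow> (\<lambda>h. g \<circ> h) ` G = G"
  using comp_in_G inv_in_G G_comp_inv by (auto simp: image_iff intro!: bexI[of _ "inv g \<circ> _"]
      simp flip: comp_assoc)

lemma arc_regular_unique:
  assumes "g \<in> G" "h \<in> G" "E u w" "g u = h u" "g w = h w" shows "g = h"
proof -
  have "(u, w) \<in> arcs E" "(g u, g w) \<in> arcs E" using assms G_edge unfolding arcs_def by auto
  then have "\<exists>!f. f \<in> G \<and> (f u, f w) = (g u, g w)"
    using regular unfolding arc_regular_def by fastforce
  then show ?thesis using assms by auto
qed

lemma arc_regular_fix: "g \<in> G \<Longrightarrow> E u w \<Longrightarrow> g u = u \<Longrightarrow> g w = w \<Longrightarrow> g = id"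
  using arc_regular_unique[of g id u w] id_in_G by simp

lemma arc_transitive:
  assumes "E u w" "E x y" shows "\<exists>g\<in>G. g u = x \<and> g w = y"
proof -
  have "(u, w) \<in> arcs E" "(x, y) \<in> arcs E" using assms unfolding arcs_def by auto
  then show ?thesis using regular unfolding arc_regular_def by fastforce
qed

lemma fixed_vertex_edge_image:
  assumes "g \<in> G" "E v a" "g v = v" "g ` {v, a} = {v, b}" shows "g a = b"
proof -
  have "g a \<noteq> v" using assms(1-3) edge_irrefl G_inj by (metis injD)
  then show ?thesis using assms(3,4) by (auto simp: doubleton_eq_iff)
qed

lemma dcycle_converse': "dcycle E D \<Longrightarrow> dcycle E (D\<inverse>)"
  using dcycle_converse edge_sym by blast

lemma dcycle_arc_img': "g \<in> G \<Longrightarrow> dcycle E D \<Longrightarrow> dcycle E (arc_img g D)"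
  using dcycle_arc_img G_inj G_edge by blast

lemma rotates_arc_img': "g \<in> G \<Longrightarrow> rotates r D \<Longrightarrow> rotates (g \<circ> r \<circ> inv g) (arc_img g D)"
  using rotates_arc_img G_inj by blast

lemma arc_img_rotation:
  assumes "r \<in> G" "dcycle E D" "rotates r D" shows "arc_img r D = D"
proof -
  have "r \<circ> r \<circ> inv r = r" using G_apply_inv[OF assms(1)] by auto
  then have rot: "rotates r (arc_img r D)" using rotates_arc_img'[OF assms(1,3)] by simp
  obtain x y where xy: "(x, y) \<in> D" using dcycle_nonempty[OF assms(2)] by blast
  then have "(r x, r y) \<in> arc_img r D" "r x = y"
    using assms(3) unfolding arc_img_iff rotates_def by auto
  moreover have "y \<in> Domain D" using xy dcycle_Domain_eq_Range[OF assms(2)] by blast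
  ultimately show ?thesis
    using dcycle_eq_if_rotates[OF dcycle_arc_img'[OF assms(1,2)] assms(2) rot assms(3)] by blast
qed

lemma arc_img_funpow_rotation:
  "r \<in> G \<Longrightarrow> dcycle E D \<Longrightarrow> rotates r D \<Longrightarrow> arc_img (r ^^ n) D = D"
  by (induction n) (simp_all add: arc_img_id arc_img_comp arc_img_rotation)

lemma ucycle_edge:
  assumes "ucycle E C" "{u, w} \<in> C" shows "E u w"
proof (rule ucycle_memE[OF assms])
  fix x y assume "{u, w} = {x, y}" "E x y"
  then show "E u w" using edge_sym by (metis doubleton_eq_iff)
qed

lemma consistent_cycle_orientation:
  assumes "consistent_cycle E G C" "{u, w} \<in> C"
  obtains D r where "dcycle E D" "ucycle_of D = C" "r \<in> G" "rotates r D" "(u, w) \<in> D"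
proof -
  obtain D where D: "dcycle E D" "ucycle_of D = C"
    using assms(1) unfolding consistent_cycle_def ucycle_def by blast
  have orient: "orientation E D' C \<Longrightarrow> \<exists>r\<in>G. rotates r D'" for D'
    using assms(1) unfolding consistent_cycle_def consistent_dcycle_iff by blast
  have o: "orientation E D C" "orientation E (D\<inverse>) C"
    using D dcycle_converse' ucycle_of_converse unfolding orientation_def by auto
  have "(u, w) \<in> D \<or> (u, w) \<in> D\<inverse>" using assms(2) D(2) ucycle_of_iff by fastforce
  then show ?thesis
  proof
    assume "(u, w) \<in> D"
    then show ?thesis using that D orient[OF o(1)] by blast
  next
    assume "(u, w) \<in> D\<inverse>"
    then show ?thesis using that o(2) orient[OF o(2)] unfolding orientation_def by blast
  qed
qed

lemma consistent_cycle_cyc_img: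
  assumes "g \<in> G" "consistent_cycle E G C" shows "consistent_cycle E G (cyc_img g C)"
proof -
  obtain D where D: "dcycle E D" "C = ucycle_of D"
    using assms(2) unfolding consistent_cycle_def ucycle_def by blast
  then have "ucycle E (cyc_img g C)"
    unfolding ucycle_def using dcycle_arc_img'[OF assms(1)] ucycle_of_arc_img by metis
  moreover have "consistent_dcycle G D'" if "orientation E D' (cyc_img g C)" for D'
  proof -
    define D'' where "D'' = arc_img (inv g) D'"
    have D': "dcycle E D'" "ucycle_of D' = cyc_img g C" using that unfolding orientation_def by auto
    then have "orientation E D'' C" unfolding orientation_def D''_def
      using dcycle_arc_img'[OF inv_in_G[OF assms(1)]]
      by (simp add: ucycle_of_arc_img cyc_img_comp[symmetric] G_inv_comp[OF assms(1)] cyc_img_id)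
    then obtain r where "r \<in> G" "rotates r D''"
      using assms(2) unfolding consistent_cycle_def consistent_dcycle_iff by blast
    moreover have "arc_img g D'' = D'"
      unfolding D''_def by (simp add: arc_img_comp[symmetric] G_comp_inv[OF assms(1)] arc_img_id)
    ultimately show ?thesis unfolding consistent_dcycle_iff
      using rotates_arc_img'[OF assms(1)] comp_in_G[OF comp_in_G[OF assms(1)] inv_in_G[OF assms(1)]]
      by metis
  qed
  ultimately show ?thesis unfolding consistent_cycle_def by blast
qed

lemma consistent_cycle_unique_2arc:
  assumes "consistent_cycle E G C" "consistent_cycle E G C'"
    and "{x, v} \<in> C" "{v, y} \<in> C" "{x, v} \<in> C'" "{v, y} \<in> C'" "x \<noteq> y"
  shows "C = C'"
proof -
  have turn: "\<exists>D r. dcycle E D \<and> ucycle_of D = C\<^sub>0 \<and> r \<in> G \<and> rotates r D \<and> (x, v) \<in> D \<and> r v = y"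
    if C\<^sub>0: "consistent_cycle E G C\<^sub>0" "{x, v} \<in> C\<^sub>0" "{v, y} \<in> C\<^sub>0" for C\<^sub>0
  proof -
    obtain D r where D: "dcycle E D" "ucycle_of D = C\<^sub>0" "r \<in> G" "rotates r D" "(x, v) \<in> D"
      using consistent_cycle_orientation[OF C\<^sub>0(1,2)] by blast
    have "(v, y) \<in> D \<or> (y, v) \<in> D" using C\<^sub>0(3) D(2) ucycle_of_iff by metis
    then have "(v, y) \<in> D" using dcycle_left_unique[OF D(1) D(5)] assms(7) by blast
    then have "r v = y" using D(4) by (rule rotatesD[rotated])
    then show ?thesis using D by blast
  qed
  obtain D r where D: "dcycle E D" "ucycle_of D = C" "r \<in> G" "rotates r D" "(x, v) \<in> D" "r v = y"
    using turn[OF assms(1,3,4)] by blast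
  obtain D' r' where D': "dcycle E D'" "ucycle_of D' = C'" "r' \<in> G" "rotates r' D'" "(x, v) \<in> D'"
    "r' v = y"
    using turn[OF assms(2,5,6)] by blast
  have "r x = r' x" using D(4,5) D'(4,5) unfolding rotates_def by auto
  then have "r = r'"
    using arc_regular_unique[OF D(3) D'(3) dcycle_edge[OF D(1,5)]] D(6) D'(6) by simp
  then have "D = D'" using dcycle_eq_if_rotates[OF D(1) D'(1) D(4)] D'(4) D(5) D'(5) by blast
  then show ?thesis using D(2) D'(2) by simp
qed

lemma cyc_img_injective: "g \<in> G \<Longrightarrow> cyc_img g C = cyc_img g C' \<Longrightarrow> C = C'"
  by (metis G_inv_comp cyc_img_comp cyc_img_id)

lemma cyc_orbit_eq_image: "cyc_orbit G C = (\<lambda>g. cyc_img g C) ` G"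
  unfolding cyc_orbit_def by blast

lemma cyc_orbit_cyc_img:
  assumes "g \<in> G" shows "cyc_orbit G (cyc_img g C) = cyc_orbit G C"
proof -
  have "cyc_orbit G (cyc_img g C) = ((\<lambda>h. cyc_img h C) \<circ> (\<lambda>h. h \<circ> g)) ` G"
    unfolding cyc_orbit_eq_image
    by (rule arg_cong[where f = "\<lambda>f. f ` G"]) (simp add: fun_eq_iff cyc_img_comp)
  also have "\<dots> = cyc_orbit G C"
    unfolding cyc_orbit_eq_image image_comp[symmetric] image_comp_right_G[OF assms] ..
  finally show ?thesis .
qed

lemma cyc_img_image_cyc_orbit:
  assumes "g \<in> G" shows "cyc_img g ` cyc_orbit G C = cyc_orbit G C"
proof -
  have "cyc_img g ` cyc_orbit G C = ((\<lambda>h. cyc_img h C) \<circ> (\<lambda>h. g \<circ> h)) ` G"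
    unfolding cyc_orbit_eq_image image_comp
    by (rule arg_cong[where f = "\<lambda>f. f ` G"]) (simp add: fun_eq_iff cyc_img_comp)
  also have "\<dots> = cyc_orbit G C"
    unfolding cyc_orbit_eq_image image_comp[symmetric] image_comp_left_G[OF assms] ..
  finally show ?thesis .
qed

lemma cyc_orbit_eq_if_mem: "C' \<in> cyc_orbit G C \<Longrightarrow> cyc_orbit G C' = cyc_orbit G C"
  unfolding cyc_orbit_eq_image using cyc_orbit_cyc_img[unfolded cyc_orbit_eq_image] by blast

lemma edge_in_cyc_orbit:
  assumes "consistent_cycle E G C" "E u w" shows "\<exists>C'\<in>cyc_orbit G C. {u, w} \<in> C'"
proof -
  have "ucycle E C" using assms(1) unfolding consistent_cycle_def by blast
  then obtain x y where xy: "{x, y} \<in> C" "E x y" using ucycle_nonempty ucycle_edge by metis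
  then obtain g where "g \<in> G" "g x = u" "g y = w" using arc_transitive assms(2) by blast
  moreover have "g ` {x, y} \<in> cyc_img g C" using xy(1) unfolding cyc_img_def by (rule imageI)
  ultimately show ?thesis unfolding cyc_orbit_eq_image by auto
qed

lemma symmetric_cycle_consistent: "symmetric_cycle E G C \<Longrightarrow> consistent_cycle E G C"
  unfolding symmetric_cycle_def by blast

lemma symmetric_cycle_orientation:
  assumes "symmetric_cycle E G C" "{u, w} \<in> C"
  obtains D r k where "dcycle E D" "ucycle_of D = C" "r \<in> G" "rotates r D" "(u, w) \<in> D"
    "k \<in> G" "arc_img k D = D\<inverse>"
proof -
  obtain k D\<^sub>0 where k: "k \<in> G" "orientation E D\<^sub>0 C" "arc_img k D\<^sub>0 = D\<^sub>0\<inverse>"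
    using assms(1) unfolding symmetric_cycle_def by blast
  have "orientation E (D\<^sub>0\<inverse>) C" "arc_img k (D\<^sub>0\<inverse>) = (D\<^sub>0\<inverse>)\<inverse>"
    using k dcycle_converse' ucycle_of_converse by (auto simp: orientation_def arc_img_converse)
  moreover have "(u, w) \<in> D\<^sub>0 \<or> (u, w) \<in> D\<^sub>0\<inverse>"
    using assms(2) k(2) ucycle_of_iff unfolding orientation_def by fastforce
  ultimately obtain D where D: "orientation E D C" "arc_img k D = D\<inverse>" "(u, w) \<in> D"
    using k by blast
  moreover obtain r where "r \<in> G" "rotates r D"
    using D(1) symmetric_cycle_consistent[OF assms(1)]
    unfolding consistent_cycle_def consistent_dcycle_iff by blast
  ultimately show ?thesis using that k(1) unfolding orientation_def by blast
qed

lemma cyc_img_ucycle_of_eq: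
  "arc_img m D = D \<or> arc_img m D = D\<inverse> \<Longrightarrow> cyc_img m (ucycle_of D) = ucycle_of D"
  by (elim disjE) (simp_all add: ucycle_of_arc_img[symmetric] ucycle_of_converse)

lemma symmetric_cycle_stabiliser_arc_transitive:
  assumes "symmetric_cycle E G C" "{x, y} \<in> C" "{s, t} \<in> C"
  shows "\<exists>m\<in>G. m x = s \<and> m y = t \<and> cyc_img m C = C"
proof -
  obtain D r k where D: "dcycle E D" "ucycle_of D = C" "r \<in> G" "rotates r D" "(x, y) \<in> D"
    and k: "k \<in> G" "arc_img k D = D\<inverse>"
    using symmetric_cycle_orientation[OF assms(1,2)] by blast
  have "(s, t) \<in> D \<or> (t, s) \<in> D" using assms(3) D(2) ucycle_of_iff by metis
  then obtain m where m: "m \<in> G" "m x = s" "m y = t" "arc_img m D = D \<or> arc_img m D = D\<inverse>"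
  proof
    assume "(s, t) \<in> D"
    then obtain j where "(r ^^ j) x = s" "(r ^^ j) y = t"
      using rotation_arc_transitive[OF D(1,4,5)] by blast
    then show ?thesis
      using that[of "r ^^ j"] funpow_in_G[OF D(3)] arc_img_funpow_rotation[OF D(3,1,4)] by blast
  next
    assume "(t, s) \<in> D"
    have "(k x, k y) \<in> arc_img k D" using D(5) unfolding arc_img_iff by blast
    then have "(k y, k x) \<in> D" using k(2) by simp
    then obtain j where "(r ^^ j) (k y) = t" "(r ^^ j) (k x) = s"
      using rotation_arc_transitive[OF D(1,4) _ \<open>(t, s) \<in> D\<close>] by blast
    moreover have "arc_img ((r ^^ j) \<circ> k) D = D\<inverse>"
      by (simp add: arc_img_comp k(2) arc_img_converse arc_img_funpow_rotation[OF D(3,1,4)])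
    ultimately show ?thesis
      using that[of "(r ^^ j) \<circ> k"] comp_in_G[OF funpow_in_G[OF D(3)] k(1)] by simp
  qed
  moreover have "cyc_img m C = C" using cyc_img_ucycle_of_eq[OF m(4)] D(2) by simp
  ultimately show ?thesis by blast
qed

lemma symmetric_orbit_edge_unique:
  assumes "\<forall>C'\<in>cyc_orbit G C. symmetric_cycle E G C'"
    and "C\<^sub>1 \<in> cyc_orbit G C" "C\<^sub>2 \<in> cyc_orbit G C" "{u, w} \<in> C\<^sub>1" "{u, w} \<in> C\<^sub>2"
  shows "C\<^sub>1 = C\<^sub>2"
proof -
  have sym: "symmetric_cycle E G C\<^sub>1" using assms(1,2) by blast
  have "C\<^sub>2 \<in> cyc_orbit G C\<^sub>1" using assms(2,3) cyc_orbit_eq_if_mem by blast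
  then obtain h where h: "h \<in> G" "C\<^sub>2 = cyc_img h C\<^sub>1" unfolding cyc_orbit_def by blast
  have "{u, w} \<in> (\<lambda>e. h ` e) ` C\<^sub>1" using assms(5) unfolding h(2) cyc_img_def .
  then obtain e where e: "e \<in> C\<^sub>1" "{u, w} = h ` e" by blast
  moreover obtain s t where "e = {s, t}"
    using ucycle_memE[OF _ e(1)] sym unfolding symmetric_cycle_def consistent_cycle_def by metis
  ultimately have "{u, w} = {h s, h t}" "{s, t} \<in> C\<^sub>1" "{t, s} \<in> C\<^sub>1" by (auto simp: insert_commute)
  then obtain s t where st: "{s, t} \<in> C\<^sub>1" "h s = u" "h t = w" by (metis doubleton_eq_iff)
  obtain m where m: "m \<in> G" "m u = s" "m w = t" "cyc_img m C\<^sub>1 = C\<^sub>1"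
    using symmetric_cycle_stabiliser_arc_transitive[OF sym assms(4) st(1)] by blast
  have "ucycle E C\<^sub>1" using sym unfolding symmetric_cycle_def consistent_cycle_def by blast
  then have "E u w" using ucycle_edge assms(4) by blast
  then have "h \<circ> m = id" using arc_regular_fix[OF comp_in_G[OF h(1) m(1)]] st m by simp
  then show ?thesis using h(2) m(4) by (metis cyc_img_comp cyc_img_id)
qed

lemma reflection_of_dcycle:
  assumes "r \<in> G" "dcycle E D" "rotates r D" "(a, v) \<in> D" "(v, d) \<in> D"
    and "k \<in> G" "k v = v" "k a = d" "k d = a"
  shows "arc_img k D = D\<inverse>"
proof -
  have r: "r a = v" "r v = d" using rotatesD[OF assms(3)] assms(4,5) by simp_all
  have "inv k v = v" "inv k d = a" using G_inv_apply[OF assms(6)] assms(7,8) by metis+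
  moreover have "inv r d = v" "inv r v = a" using G_inv_apply[OF assms(1)] r by metis+
  ultimately have "(k \<circ> r \<circ> inv k) d = inv r d" "(k \<circ> r \<circ> inv k) v = inv r v"
    using r assms(7,9) by simp_all
  then have "k \<circ> r \<circ> inv k = inv r"
    using arc_regular_unique[OF comp_in_G[OF comp_in_G[OF assms(6,1)] inv_in_G[OF assms(6)]]
        inv_in_G[OF assms(1)] edge_sym[OF dcycle_edge[OF assms(2,5)]]] by blast
  then have rot: "rotates (inv r) (arc_img k D)" using rotates_arc_img'[OF assms(6,3)] by simp
  have "(k v, k d) \<in> arc_img k D" using assms(5) unfolding arc_img_iff by blast
  then have "v \<in> Domain (arc_img k D)" using assms(7) by force
  moreover have "v \<in> Domain (D\<inverse>)" using assms(4) by blast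
  ultimately show ?thesis using rot
    using dcycle_eq_if_rotates[OF dcycle_arc_img'[OF assms(6,2)] dcycle_converse'[OF assms(2)]]
      rotates_converse[OF G_inj[OF assms(1)] assms(3)] by blast
qed

lemma symmetric_cycle_if_vertex_swaps:
  assumes swap: "\<And>v a d. E v a \<Longrightarrow> E v d \<Longrightarrow> a \<noteq> d \<Longrightarrow> \<exists>k\<in>G. k v = v \<and> k a = d \<and> k d = a"
    and "consistent_cycle E G C"
  shows "symmetric_cycle E G C"
proof -
  obtain D where D: "orientation E D C"
    using assms(2) unfolding consistent_cycle_def ucycle_def orientation_def by blast
  then have dc: "dcycle E D" unfolding orientation_def by blast
  obtain r where r: "r \<in> G" "rotates r D"
    using D assms(2) unfolding consistent_cycle_def consistent_dcycle_iff by blast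
  obtain a v where av: "(a, v) \<in> D" using dcycle_nonempty[OF dc] by blast
  then obtain d where vd: "(v, d) \<in> D" using dcycle_Domain_eq_Range[OF dc] by blast
  have "a \<noteq> d" using dcycle_asym[OF dc av] vd by blast
  then obtain k where "k \<in> G" "k v = v" "k a = d" "k d = a"
    using swap edge_sym[OF dcycle_edge[OF dc av]] dcycle_edge[OF dc vd] by blast
  then show ?thesis using reflection_of_dcycle[OF r(1) dc r(2) av vd] D assms(2)
    unfolding symmetric_cycle_def by blast
qed

lemma symmetric_orbits_if_vertex_swaps:
  assumes "\<And>v a d. E v a \<Longrightarrow> E v d \<Longrightarrow> a \<noteq> d \<Longrightarrow> \<exists>k\<in>G. k v = v \<and> k a = d \<and> k d = a"
  shows "\<forall>Orb\<in>cc_orbits E G. symmetric_orbit E G Orb"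
proof (clarsimp simp: cc_orbits_def symmetric_orbit_def cyc_orbit_eq_image)
  fix C g assume "consistent_cycle E G C" "g \<in> G"
  then show "symmetric_cycle E G (cyc_img g C)"
    using symmetric_cycle_if_vertex_swaps[OF assms] consistent_cycle_cyc_img by blast
qed

text \<open>Since v has only four neighbours, s1 maps b2 to d and s2 maps d to b1.\<close>
lemma composed_vertex_swaps:
  assumes "tetravalent V E" "E v a" "E v b\<^sub>1" "E v b\<^sub>2" "E v d" "distinct [a, b\<^sub>1, b\<^sub>2, d]"
    and s1: "s\<^sub>1 \<in> G" "s\<^sub>1 v = v" "s\<^sub>1 a = b\<^sub>1" "s\<^sub>1 b\<^sub>1 = a"
    and s2: "s\<^sub>2 \<in> G" "s\<^sub>2 v = v" "s\<^sub>2 a = b\<^sub>2" "s\<^sub>2 b\<^sub>2 = a"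
  shows "(s\<^sub>1 \<circ> s\<^sub>2) a = d" "(s\<^sub>1 \<circ> s\<^sub>2) d = a"
proof -
  have nb: "x \<in> {a, b\<^sub>1, b\<^sub>2, d}" if "E v x" for x
    using tetravalent_neighbour_cases[OF assms(1) _ assms(6,2-5) that] edge_vertices assms(2) by blast
  have "s\<^sub>1 b\<^sub>2 \<in> {a, b\<^sub>1, b\<^sub>2, d}" using nb G_edge[OF s1(1) assms(4)] s1(2) by simp
  moreover have "s\<^sub>1 b\<^sub>2 \<noteq> b\<^sub>2" using arc_regular_fix[OF s1(1) assms(4) s1(2)] s1(3) assms(6) by auto
  moreover have "s\<^sub>1 b\<^sub>2 \<noteq> a" "s\<^sub>1 b\<^sub>2 \<noteq> b\<^sub>1"
    using s1(3,4) injD[OF G_inj[OF s1(1)]] assms(6) by (metis distinct_length_2_or_more)+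
  ultimately have "s\<^sub>1 b\<^sub>2 = d" by blast
  have "s\<^sub>2 d \<in> {a, b\<^sub>1, b\<^sub>2, d}" using nb G_edge[OF s2(1) assms(5)] s2(2) by simp
  moreover have "s\<^sub>2 d \<noteq> d" using arc_regular_fix[OF s2(1) assms(5) s2(2)] s2(3) assms(6) by auto
  moreover have "s\<^sub>2 d \<noteq> a" "s\<^sub>2 d \<noteq> b\<^sub>2"
    using s2(3,4) injD[OF G_inj[OF s2(1)]] assms(6) by (metis distinct_length_2_or_more list.set_intros)+
  ultimately have "s\<^sub>2 d = b\<^sub>1" by blast
  then show "(s\<^sub>1 \<circ> s\<^sub>2) a = d" "(s\<^sub>1 \<circ> s\<^sub>2) d = a" using s1(4) s2(3) \<open>s\<^sub>1 b\<^sub>2 = d\<close> by simp_all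
qed

lemma flag_act_simp [simp]: "flag_act g (v, e, f) = (g v, g ` e, cyc_img g f)"
  unfolding flag_act_def by simp

lemma flag_act_comp: "flag_act (g \<circ> h) P = flag_act g (flag_act h P)"
  unfolding flag_act_def by (auto simp: cyc_img_comp image_comp split: prod.split)

lemma flag_act_id: "flag_act id P = P"
  unfolding flag_act_def by (auto simp: cyc_img_id split: prod.split)

lemma flag_orbit_eq_image: "flag_orbit A P = (\<lambda>g. flag_act g P) ` A"
  unfolding flag_orbit_def by blast

lemma flagsE:
  assumes "(v, e, f) \<in> flags V E F"
  obtains a where "e = {v, a}" "E v a" "f \<in> F" "{v, a} \<in> f" "v \<in> V"
  using assms is_edge_at_vertex unfolding flags_def by blast

lemma flag_orbit_flag_act:
  assumes "g \<in> G" shows "flag_orbit G (flag_act g P) = flag_orbit G P"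
proof -
  have "flag_orbit G (flag_act g P) = ((\<lambda>h. flag_act h P) \<circ> (\<lambda>h. h \<circ> g)) ` G"
    unfolding flag_orbit_eq_image
    by (rule arg_cong[where f = "\<lambda>f. f ` G"]) (simp add: fun_eq_iff flag_act_comp)
  also have "\<dots> = flag_orbit G P"
    unfolding flag_orbit_eq_image image_comp[symmetric] image_comp_right_G[OF assms] ..
  finally show ?thesis .
qed

lemma flag_in_flag_orbit: "P \<in> flag_orbit G P"
  unfolding flag_orbit_eq_image using id_in_G flag_act_id by (metis image_eqI)

end

section \<open>Consistent cycles of a map in class 2_{0,1}\<close>

locale map_in_class_2_01 = arc_regular_action +
  fixes F :: "'a set set set"
  assumes tetravalent: "tetravalent V E" and polytopal: "polytopal_map V E F"
    and class_2_01: "class_2_01 V E F" and map_aut_eq: "map_aut V E F = G"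
begin

lemma face_ucycle: "f \<in> F \<Longrightarrow> ucycle E f"
  using polytopal unfolding polytopal_map_def by blast

lemma faces_at_edge:
  assumes "E v a" obtains f\<^sub>1 f\<^sub>2 where "f\<^sub>1 \<noteq> f\<^sub>2" "{f\<in>F. {v, a} \<in> f} = {f\<^sub>1, f\<^sub>2}"
proof -
  have "is_edge E {v, a}" using assms unfolding is_edge_def by blast
  then have "card {f\<in>F. {v, a} \<in> f} = 2" using polytopal unfolding polytopal_map_def by blast
  then show ?thesis using that unfolding card_2_iff by blast
qed

lemma link_connected_faces:
  assumes "E v a" "E v d"
  shows "({v, a}, {v, d}) \<in> {(x, y). is_edge E x \<and> v \<in> x \<and> is_edge E y \<and> v \<in> y
                                     \<and> (\<exists>f\<in>F. x \<in> f \<and> y \<in> f)}\<^sup>*"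
proof -
  have "is_edge E {v, a}" "is_edge E {v, d}" using assms unfolding is_edge_def by blast+
  then show ?thesis using polytopal edge_vertices[OF assms(1)] unfolding polytopal_map_def by blast
qed

text \<open>The automorphism mapping a flag to its 1-adjacent flag swaps the two edges of the
  face at the vertex.\<close>
lemma face_swap:
  assumes "f \<in> F" "{v, a} \<in> f" "{v, b} \<in> f" "a \<noteq> b"
  shows "\<exists>s\<in>G. s v = v \<and> s a = b \<and> s b = a"
proof -
  have Ea: "E v a" and Eb: "E v b" using ucycle_edge face_ucycle assms(1-3) by blast+
  let ?P = "(v, {v, a}, f)" and ?Q = "(v, {v, b}, f)"
  have "?P \<in> flags V E F" "?Q \<in> flags V E F"
    using assms(1-3) Ea Eb edge_vertices unfolding flags_def is_edge_def by blast+
  moreover have "flag_adj 1 ?P ?Q"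
    using assms(4) edge_irrefl[OF Ea] unfolding flag_adj_def by (auto simp: doubleton_eq_iff)
  ultimately have "?Q \<in> flag_orbit G ?P"
    using class_2_01 map_aut_eq unfolding class_2_01_def by blast
  then obtain g where g: "g \<in> G" "g v = v" "g ` {v, a} = {v, b}" "cyc_img g f = f"
    unfolding flag_orbit_def by auto
  have ga: "g a = b" using fixed_vertex_edge_image[OF g(1) Ea g(2,3)] .
  have "g ` {v, b} \<in> cyc_img g f" using assms(3) unfolding cyc_img_def by (rule imageI)
  then have "{v, g b} \<in> f" using g(2,4) by simp
  then have "a = g b \<or> b = g b" using ucycle_at_most_two_edges[OF face_ucycle] assms by blast
  moreover have "g b \<noteq> b" using arc_regular_fix[OF g(1) Eb g(2)] ga assms(4) by auto
  ultimately show ?thesis using g(1,2) ga by auto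
qed

text \<open>If both faces through the edge va continued through the same edge vb, these two
  edges would form a connected component of the link of v.\<close>
lemma faces_at_edge_turn_apart:
  assumes "E v a" "E v d" "d \<noteq> a" "f\<^sub>1 \<noteq> f\<^sub>2" "{f\<in>F. {v, a} \<in> f} = {f\<^sub>1, f\<^sub>2}"
    and "b \<noteq> a" "{v, b} \<in> f\<^sub>1" "{v, b} \<in> f\<^sub>2"
  shows "d = b"
proof -
  have f: "f\<^sub>1 \<in> F" "f\<^sub>2 \<in> F" "{v, a} \<in> f\<^sub>1" "{v, a} \<in> f\<^sub>2" using assms(5) by blast+
  have "E v b" using ucycle_edge face_ucycle f(1) assms(7) by blast
  then obtain g\<^sub>1 g\<^sub>2 where "{f\<in>F. {v, b} \<in> f} = {g\<^sub>1, g\<^sub>2}" by (rule faces_at_edge)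
  then have faces_b: "{f\<in>F. {v, b} \<in> f} = {f\<^sub>1, f\<^sub>2}"
    using f assms(4,7,8) by (metis (no_types, lifting) doubleton_eq_iff mem_Collect_eq insertE
        insertI1 insertI2 singletonD)
  define R where "R = {(x, y). is_edge E x \<and> v \<in> x \<and> is_edge E y \<and> v \<in> y
                                \<and> (\<exists>f\<in>F. x \<in> f \<and> y \<in> f)}"
  have "y \<in> {{v, a}, {v, b}}" if "({v, a}, y) \<in> R\<^sup>*" for y
    using that
  proof (induction rule: rtrancl_induct)
    case (step y z)
    then obtain f where "f \<in> F" "y \<in> f" "z \<in> f" "is_edge E z" "v \<in> z" unfolding R_def by blast
    moreover from this obtain c where "z = {v, c}"
      unfolding is_edge_def by (auto simp: insert_commute)
    moreover have "f \<in> {f\<^sub>1, f\<^sub>2}" using step.IH calculation(1,2) assms(5) faces_b by blast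
    ultimately show ?case
      using ucycle_at_most_two_edges[OF face_ucycle, of f v a b c] f assms(6-8) by auto
  qed simp
  then have "{v, d} \<in> {{v, a}, {v, b}}" using link_connected_faces[OF assms(1,2)] R_def by blast
  then show ?thesis using assms(3) by (auto simp: doubleton_eq_iff)
qed

text \<open>Composing the face swaps at the two faces through va yields every swap at v.\<close>
lemma vertex_swap:
  assumes "E v a" "E v d" "a \<noteq> d"
  shows "\<exists>k\<in>G. k v = v \<and> k a = d \<and> k d = a"
proof -
  obtain f\<^sub>1 f\<^sub>2 where f12: "f\<^sub>1 \<noteq> f\<^sub>2" "{f\<in>F. {v, a} \<in> f} = {f\<^sub>1, f\<^sub>2}"
    using faces_at_edge[OF assms(1)] by blast
  then have f: "f\<^sub>1 \<in> F" "{v, a} \<in> f\<^sub>1" "f\<^sub>2 \<in> F" "{v, a} \<in> f\<^sub>2" by blast+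
  obtain b\<^sub>1 where b1: "b\<^sub>1 \<noteq> a" "{v, b\<^sub>1} \<in> f\<^sub>1" using ucycle_other_edge[OF face_ucycle] f by blast
  obtain b\<^sub>2 where b2: "b\<^sub>2 \<noteq> a" "{v, b\<^sub>2} \<in> f\<^sub>2" using ucycle_other_edge[OF face_ucycle] f by blast
  obtain s\<^sub>1 where s1: "s\<^sub>1 \<in> G" "s\<^sub>1 v = v" "s\<^sub>1 a = b\<^sub>1" "s\<^sub>1 b\<^sub>1 = a"
    using face_swap[OF f(1,2) b1(2)] b1(1) by blast
  obtain s\<^sub>2 where s2: "s\<^sub>2 \<in> G" "s\<^sub>2 v = v" "s\<^sub>2 a = b\<^sub>2" "s\<^sub>2 b\<^sub>2 = a"
    using face_swap[OF f(3,4) b2(2)] b2(1) by blast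
  consider "d = b\<^sub>1" | "d = b\<^sub>2" | "d \<noteq> b\<^sub>1" "d \<noteq> b\<^sub>2" by blast
  then show ?thesis
  proof cases
    case 3
    have "b\<^sub>1 \<noteq> b\<^sub>2"
      using faces_at_edge_turn_apart[OF assms(1,2) assms(3)[symmetric] f12 b1] b2(2) 3 by blast
    have E: "E v b\<^sub>1" "E v b\<^sub>2" using ucycle_edge face_ucycle f b1(2) b2(2) by blast+
    have "distinct [a, b\<^sub>1, b\<^sub>2, d]" using b1(1) b2(1) assms(3) 3 \<open>b\<^sub>1 \<noteq> b\<^sub>2\<close> by auto
    then have "(s\<^sub>1 \<circ> s\<^sub>2) a = d" "(s\<^sub>1 \<circ> s\<^sub>2) d = a"
      using composed_vertex_swaps[OF tetravalent assms(1) E assms(2) _ s1 s2] by blast+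
    moreover have "(s\<^sub>1 \<circ> s\<^sub>2) v = v" using s1(2) s2(2) by simp
    ultimately show ?thesis using comp_in_G[OF s1(1) s2(1)] by blast
  qed (use s1 s2 in blast)+
qed

theorem consistent_cycles_symmetric: "\<forall>Orb\<in>cc_orbits E G. symmetric_orbit E G Orb"
  using symmetric_orbits_if_vertex_swaps vertex_swap by blast

end

section \<open>The map whose faces form two orbits of consistent cycles\<close>

locale two_cycle_orbits = arc_regular_action +
  fixes C\<^sub>1 C\<^sub>2 :: "'a set set"
  assumes tetravalent: "tetravalent V E" and connected: "connected_graph V E"
    and G_eq_graph_aut: "G = graph_aut V E"
    and all_symmetric: "\<forall>Orb\<in>cc_orbits E G. symmetric_orbit E G Orb"
    and consistent_1: "consistent_cycle E G C\<^sub>1" and consistent_2: "consistent_cycle E G C\<^sub>2"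
    and orbits_distinct: "cyc_orbit G C\<^sub>1 \<noteq> cyc_orbit G C\<^sub>2"
begin

abbreviation faces :: "'a set set set" where
  "faces \<equiv> cyc_orbit G C\<^sub>1 \<union> cyc_orbit G C\<^sub>2"

lemma orbit_symmetric: "consistent_cycle E G C \<Longrightarrow> \<forall>C'\<in>cyc_orbit G C. symmetric_cycle E G C'"
  using all_symmetric unfolding cc_orbits_def symmetric_orbit_def by blast

lemma face_symmetric: "f \<in> faces \<Longrightarrow> symmetric_cycle E G f"
  using orbit_symmetric consistent_1 consistent_2 by blast

lemma face_consistent: "f \<in> faces \<Longrightarrow> consistent_cycle E G f"
  using face_symmetric symmetric_cycle_consistent by blast

lemma face_ucycle: "f \<in> faces \<Longrightarrow> ucycle E f"
  using face_consistent unfolding consistent_cycle_def by blast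

lemma faces_at_edge:
  assumes "E u w"
  obtains f\<^sub>1 f\<^sub>2 where "f\<^sub>1 \<in> cyc_orbit G C\<^sub>1" "f\<^sub>2 \<in> cyc_orbit G C\<^sub>2" "f\<^sub>1 \<noteq> f\<^sub>2"
    "{f\<in>faces. {u, w} \<in> f} = {f\<^sub>1, f\<^sub>2}"
proof -
  obtain f\<^sub>1 where f1: "f\<^sub>1 \<in> cyc_orbit G C\<^sub>1" "{u, w} \<in> f\<^sub>1"
    using edge_in_cyc_orbit[OF consistent_1 assms] by blast
  obtain f\<^sub>2 where f2: "f\<^sub>2 \<in> cyc_orbit G C\<^sub>2" "{u, w} \<in> f\<^sub>2"
    using edge_in_cyc_orbit[OF consistent_2 assms] by blast
  have "f\<^sub>1 \<noteq> f\<^sub>2"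
  proof
    assume "f\<^sub>1 = f\<^sub>2"
    then have "cyc_orbit G C\<^sub>1 = cyc_orbit G C\<^sub>2"
      using cyc_orbit_eq_if_mem[OF f1(1)] cyc_orbit_eq_if_mem[OF f2(1)] by simp
    then show False using orbits_distinct by contradiction
  qed
  moreover have "{f\<in>faces. {u, w} \<in> f} = {f\<^sub>1, f\<^sub>2}"
  proof (intro equalityI subsetI)
    fix f assume f: "f \<in> {f\<in>faces. {u, w} \<in> f}"
    show "f \<in> {f\<^sub>1, f\<^sub>2}"
    proof (cases "f \<in> cyc_orbit G C\<^sub>1")
      case True
      then show ?thesis
        using symmetric_orbit_edge_unique[OF orbit_symmetric[OF consistent_1] _ f1(1) _ f1(2)] f
        by blast
    next
      case False
      then show ?thesis
        using symmetric_orbit_edge_unique[OF orbit_symmetric[OF consistent_2] _ f2(1) _ f2(2)] f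
        by blast
    qed
  qed (use f1 f2 in blast)
  ultimately show ?thesis using that f1(1) f2(1) by blast
qed

lemma card_faces_at_edge:
  assumes "is_edge E e" shows "card {f\<in>faces. e \<in> f} = 2"
proof -
  obtain u w where "E u w" "e = {u, w}" using assms unfolding is_edge_def by blast
  then show ?thesis using faces_at_edge[of u w] by (metis card_2_iff)
qed

text \<open>The two turns differ because a consistent cycle is determined by a 2-arc.\<close>
lemma turns_at_edge:
  assumes "E v x"
  obtains y\<^sub>1 y\<^sub>2 where "y\<^sub>1 \<noteq> y\<^sub>2" "y\<^sub>1 \<noteq> x" "y\<^sub>2 \<noteq> x" "E v y\<^sub>1" "E v y\<^sub>2"
    "\<exists>f\<in>faces. {v, x} \<in> f \<and> {v, y\<^sub>1} \<in> f" "\<exists>f\<in>faces. {v, x} \<in> f \<and> {v, y\<^sub>2} \<in> f"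
proof -
  obtain f\<^sub>1 f\<^sub>2 where f: "f\<^sub>1 \<noteq> f\<^sub>2" "{f\<in>faces. {v, x} \<in> f} = {f\<^sub>1, f\<^sub>2}"
    using faces_at_edge[OF assms] by metis
  then have f1: "f\<^sub>1 \<in> faces" "{v, x} \<in> f\<^sub>1" and f2: "f\<^sub>2 \<in> faces" "{v, x} \<in> f\<^sub>2" by blast+
  obtain y\<^sub>1 where y1: "y\<^sub>1 \<noteq> x" "{v, y\<^sub>1} \<in> f\<^sub>1"
    using ucycle_other_edge[OF face_ucycle] f1 by blast
  obtain y\<^sub>2 where y2: "y\<^sub>2 \<noteq> x" "{v, y\<^sub>2} \<in> f\<^sub>2"
    using ucycle_other_edge[OF face_ucycle] f2 by blast
  have "y\<^sub>1 \<noteq> y\<^sub>2"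
  proof
    assume "y\<^sub>1 = y\<^sub>2"
    then have "f\<^sub>1 = f\<^sub>2"
      using consistent_cycle_unique_2arc[OF face_consistent[OF f1(1)] face_consistent[OF f2(1)]]
        f1(2) f2(2) y1 y2 by (simp add: insert_commute)
    then show False using f(1) by contradiction
  qed
  moreover have "E v y\<^sub>1" "E v y\<^sub>2" using ucycle_edge face_ucycle f1(1) f2(1) y1(2) y2(2) by blast+
  ultimately show ?thesis using that y1 y2 f1 f2 by blast
qed

text \<open>Every edge at v shares a face with two other edges at v, which leaves no room for two
  components among the four edges at v.\<close>
lemma link_connected:
  assumes "E v x" "E v z"
  shows "({v, x}, {v, z}) \<in> {(p, q). is_edge E p \<and> v \<in> p \<and> is_edge E q \<and> v \<in> q
                                     \<and> (\<exists>f\<in>faces. p \<in> f \<and> q \<in> f)}\<^sup>*" (is "_ \<in> ?R\<^sup>*")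
proof -
  have step: "({v, p}, {v, q}) \<in> ?R" if "E v p" "E v q" "\<exists>f\<in>faces. {v, p} \<in> f \<and> {v, q} \<in> f" for p q
    using that unfolding is_edge_def by blast
  obtain b c where bc: "b \<noteq> c" "b \<noteq> x" "c \<noteq> x" "E v b" "E v c"
    "\<exists>f\<in>faces. {v, x} \<in> f \<and> {v, b} \<in> f" "\<exists>f\<in>faces. {v, x} \<in> f \<and> {v, c} \<in> f"
    using turns_at_edge[OF assms(1)] by blast
  have reach_bc: "({v, x}, {v, b}) \<in> ?R\<^sup>*" "({v, x}, {v, c}) \<in> ?R\<^sup>*"
    using step[OF assms(1) bc(4) bc(6)] step[OF assms(1) bc(5) bc(7)] by blast+
  show ?thesis
  proof (cases "z \<in> {x, b, c}")
    case True
    then show ?thesis using reach_bc by auto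
  next
    case False
    obtain y where y: "y \<noteq> z" "E v y" "\<exists>f\<in>faces. {v, z} \<in> f \<and> {v, y} \<in> f"
      using turns_at_edge[OF assms(2)] by metis
    have "y \<in> {x, b, c, z}"
      using tetravalent_neighbour_cases[OF tetravalent _ _ assms(1) bc(4,5) assms(2) y(2)]
        edge_vertices[OF assms(1)] bc(1-3) False by auto
    then have "({v, x}, {v, y}) \<in> ?R\<^sup>*" using reach_bc y(1) by auto
    moreover have "({v, y}, {v, z}) \<in> ?R" using step[OF y(2) assms(2)] y(3) by blast
    ultimately show ?thesis by (rule rtrancl_into_rtrancl)
  qed
qed

lemma polytopal_faces: "polytopal_map V E faces"
  unfolding polytopal_map_def
proof (intro conjI ballI allI impI)
  fix v e e' assume "v \<in> V" "is_edge E e \<and> v \<in> e \<and> is_edge E e' \<and> v \<in> e'"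
  then obtain x z where "e = {v, x}" "E v x" "e' = {v, z}" "E v z"
    using is_edge_at_vertex by metis
  then show "(e, e') \<in> {(x, y). is_edge E x \<and> v \<in> x \<and> is_edge E y \<and> v \<in> y
                              \<and> (\<exists>f\<in>faces. x \<in> f \<and> y \<in> f)}\<^sup>*"
    using link_connected by blast
qed (use simple connected face_ucycle card_faces_at_edge in auto)

lemma cyc_img_image_faces: "g \<in> G \<Longrightarrow> cyc_img g ` faces = faces"
  by (simp add: image_Un cyc_img_image_cyc_orbit)

lemma map_aut_faces: "map_aut V E faces = G"
  unfolding map_aut_def G_eq_graph_aut[symmetric] using cyc_img_image_faces by blast

lemma flag_adj_0_in_orbit:
  assumes "(v, e, f) \<in> flags V E faces" "flag_adj 0 (v, e, f) (v', e', f')" "v' \<in> e'"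
  shows "(v', e', f') \<in> flag_orbit G (v, e, f)"
proof -
  obtain a where a: "e = {v, a}" "f \<in> faces" "{v, a} \<in> f" using flagsE[OF assms(1)] by metis
  have eq: "e' = e" "f' = f" "v' \<noteq> v" using assms(2) unfolding flag_adj_def by auto
  then have "v' = a" using a(1) assms(3) by auto
  have "{a, v} \<in> f" using a(3) by (simp add: insert_commute)
  then obtain m where m: "m \<in> G" "m v = a" "m a = v" "cyc_img m f = f"
    using symmetric_cycle_stabiliser_arc_transitive[OF face_symmetric[OF a(2)] a(3)] by blast
  then have "flag_act m (v, e, f) = (v', e', f')"
    using eq a(1) \<open>v' = a\<close> by (simp add: insert_commute)
  then show ?thesis unfolding flag_orbit_eq_image using m(1) by (rule image_eqI[OF sym])
qed

lemma flag_adj_1_in_orbit: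
  assumes "(v, e, f) \<in> flags V E faces" "(v', e', f') \<in> flags V E faces"
    "flag_adj 1 (v, e, f) (v', e', f')"
  shows "(v', e', f') \<in> flag_orbit G (v, e, f)"
proof -
  obtain a where a: "e = {v, a}" "f \<in> faces" "{v, a} \<in> f" using flagsE[OF assms(1)] by metis
  obtain b where b: "e' = {v', b}" "{v', b} \<in> f'" using flagsE[OF assms(2)] by metis
  have eq: "v' = v" "f' = f" using assms(3) unfolding flag_adj_def by auto
  obtain m where m: "m \<in> G" "m v = v" "m a = b" "cyc_img m f = f"
    using symmetric_cycle_stabiliser_arc_transitive[OF face_symmetric[OF a(2)] a(3)] b(2) eq
    by blast
  then have "flag_act m (v, e, f) = (v', e', f')" using eq a(1) b(1) by simp
  then show ?thesis unfolding flag_orbit_eq_image using m(1) by (rule image_eqI[OF sym])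
qed

lemma flag_adj_2_not_in_orbit:
  assumes "(v, e, f) \<in> flags V E faces" "flag_adj 2 (v, e, f) (v', e', f')"
  shows "(v', e', f') \<notin> flag_orbit G (v, e, f)"
proof
  assume "(v', e', f') \<in> flag_orbit G (v, e, f)"
  then obtain g where "g \<in> G" "flag_act g (v, e, f) = (v', e', f')"
    unfolding flag_orbit_eq_image by auto
  then have g: "g \<in> G" "g v = v'" "g ` e = e'" "cyc_img g f = f'" by simp_all
  obtain a where a: "e = {v, a}" "E v a" using flagsE[OF assms(1)] by metis
  have eq: "v' = v" "e' = e" "f' \<noteq> f" using assms(2) unfolding flag_adj_def by auto
  then have "g a = a" using fixed_vertex_edge_image[OF g(1) a(2)] g(2,3) a(1) by simp
  then have "g = id" using arc_regular_fix[OF g(1) a(2)] g(2) eq(1) by simp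
  then show False using g(4) eq(3) by (simp add: cyc_img_id)
qed

lemma flag_orbit_cases:
  assumes "E v w" "{f\<in>faces. {v, w} \<in> f} = {f\<^sub>1, f\<^sub>2}" "f\<^sub>1 \<noteq> f\<^sub>2" "P \<in> flags V E faces"
  shows "flag_orbit G P \<in> {flag_orbit G (v, {v, w}, f\<^sub>1), flag_orbit G (v, {v, w}, f\<^sub>2)}"
proof -
  obtain x e f where P: "P = (x, e, f)" by (cases P)
  then obtain y where y: "e = {x, y}" "E x y" "f \<in> faces" "{x, y} \<in> f"
    using flagsE assms(4) by metis
  obtain g where g: "g \<in> G" "g v = x" "g w = y" using arc_transitive[OF assms(1) y(2)] by blast
  obtain h\<^sub>1 h\<^sub>2 where h: "{f\<in>faces. {x, y} \<in> f} = {h\<^sub>1, h\<^sub>2}" using faces_at_edge[OF y(2)] by metis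
  have "cyc_img g f\<^sub>i \<in> {h\<^sub>1, h\<^sub>2}" if "f\<^sub>i \<in> {f\<^sub>1, f\<^sub>2}" for f\<^sub>i
  proof -
    have "f\<^sub>i \<in> faces" "{v, w} \<in> f\<^sub>i" using that assms(2) by blast+
    then have "cyc_img g f\<^sub>i \<in> cyc_img g ` faces" "g ` {v, w} \<in> cyc_img g f\<^sub>i"
      unfolding cyc_img_def by blast+
    then show ?thesis using g unfolding h[symmetric] cyc_img_image_faces[OF g(1)] by simp
  qed
  moreover have "f \<in> {h\<^sub>1, h\<^sub>2}" using y(3,4) unfolding h[symmetric] by simp
  moreover have "cyc_img g f\<^sub>1 \<noteq> cyc_img g f\<^sub>2" using cyc_img_injective[OF g(1)] assms(3) by blast
  ultimately have "f = cyc_img g f\<^sub>1 \<or> f = cyc_img g f\<^sub>2" by blast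
  then have "P = flag_act g (v, {v, w}, f\<^sub>1) \<or> P = flag_act g (v, {v, w}, f\<^sub>2)"
    using P y(1) g(2,3) by auto
  then show ?thesis
    using flag_orbit_flag_act[OF g(1), of "(v, {v, w}, f\<^sub>1)"]
      flag_orbit_flag_act[OF g(1), of "(v, {v, w}, f\<^sub>2)"] by blast
qed

lemma card_flag_orbits: "card {flag_orbit G P | P. P \<in> flags V E faces} = 2"
proof -
  obtain v where "v \<in> V" using connected unfolding connected_graph_def by blast
  then have "{w\<in>V. E v w} \<noteq> {}" using tetravalent unfolding tetravalent_def
    by (metis card.empty zero_neq_numeral)
  then obtain w where vw: "E v w" by blast
  obtain f\<^sub>1 f\<^sub>2 where f: "f\<^sub>1 \<noteq> f\<^sub>2" "{f\<in>faces. {v, w} \<in> f} = {f\<^sub>1, f\<^sub>2}"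
    using faces_at_edge[OF vw] by metis
  let ?P\<^sub>1 = "(v, {v, w}, f\<^sub>1)" and ?P\<^sub>2 = "(v, {v, w}, f\<^sub>2)"
  have flags: "?P\<^sub>1 \<in> flags V E faces" "?P\<^sub>2 \<in> flags V E faces"
    using f(2) vw edge_vertices unfolding flags_def is_edge_def by blast+
  have "flag_adj 2 ?P\<^sub>1 ?P\<^sub>2" using f(1) unfolding flag_adj_def by simp
  then have "?P\<^sub>2 \<notin> flag_orbit G ?P\<^sub>1" by (rule flag_adj_2_not_in_orbit[OF flags(1)])
  then have "flag_orbit G ?P\<^sub>1 \<noteq> flag_orbit G ?P\<^sub>2" using flag_in_flag_orbit[of ?P\<^sub>2] by metis
  moreover have "{flag_orbit G P | P. P \<in> flags V E faces} = {flag_orbit G ?P\<^sub>1, flag_orbit G ?P\<^sub>2}"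
  proof (intro equalityI subsetI)
    fix X assume "X \<in> {flag_orbit G P | P. P \<in> flags V E faces}"
    then obtain P where "X = flag_orbit G P" "P \<in> flags V E faces" by blast
    then show "X \<in> {flag_orbit G ?P\<^sub>1, flag_orbit G ?P\<^sub>2}"
      using flag_orbit_cases[OF vw f(2) f(1)] by simp
  qed (use flags in blast)
  ultimately show ?thesis by simp
qed

lemma class_2_01_faces: "class_2_01 V E faces"
  unfolding class_2_01_def map_aut_faces
proof (rule conjI[OF card_flag_orbits], intro ballI)
  fix P Q assume PQ: "P \<in> flags V E faces" "Q \<in> flags V E faces"
  obtain v e f v' e' f' where eq: "P = (v, e, f)" "Q = (v', e', f')" by (cases P, cases Q)
  have "v' \<in> e'" using PQ(2) eq(2) unfolding flags_def by blast
  then show "(flag_adj 0 P Q \<longrightarrow> Q \<in> flag_orbit G P) \<and> (flag_adj 1 P Q \<longrightarrow> Q \<in> flag_orbit G P)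
      \<and> (flag_adj 2 P Q \<longrightarrow> Q \<notin> flag_orbit G P)"
    unfolding eq using PQ[unfolded eq] flag_adj_0_in_orbit flag_adj_1_in_orbit[of v e f v' e' f']
      flag_adj_2_not_in_orbit[of v e f v' e' f'] by simp
qed

end

theorem theorem2p7:
  fixes V :: "'a set" and E :: "'a \<Rightarrow> 'a \<Rightarrow> bool" and G :: "('a \<Rightarrow> 'a) set"
  assumes "simple_graph V E" and "connected_graph V E" and "tetravalent V E"
    and "perm_subgroup V E G" and "arc_regular E G"
  shows "(\<forall>F. polytopal_map V E F \<and> class_2_01 V E F \<and> map_aut V E F = G
            \<longrightarrow> (\<forall>Orb\<in>cc_orbits E G. symmetric_orbit E G Orb))
       \<and> (G = graph_aut V E \<and> (\<forall>Orb\<in>cc_orbits E G. symmetric_orbit E G Orb)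
            \<longrightarrow> (\<forall>O1\<in>cc_orbits E G. \<forall>O2\<in>cc_orbits E G. O1 \<noteq> O2 \<longrightarrow>
                  (\<exists>F. polytopal_map V E F \<and> class_2_01 V E F \<and> map_aut V E F = G
                       \<and> F = O1 \<union> O2)))"
proof (intro conjI allI impI ballI)
  fix F Orb
  assume map: "polytopal_map V E F \<and> class_2_01 V E F \<and> map_aut V E F = G"
    and "Orb \<in> cc_orbits E G"
  interpret map_in_class_2_01 V E G F using assms map by unfold_locales auto
  show "symmetric_orbit E G Orb" using consistent_cycles_symmetric \<open>Orb \<in> cc_orbits E G\<close> by blast
next
  fix O\<^sub>1 O\<^sub>2
  assume hyp: "G = graph_aut V E \<and> (\<forall>Orb\<in>cc_orbits E G. symmetric_orbit E G Orb)"
    and orbits: "O\<^sub>1 \<in> cc_orbits E G" "O\<^sub>2 \<in> cc_orbits E G" "O\<^sub>1 \<noteq> O\<^sub>2"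
  then obtain C\<^sub>1 C\<^sub>2 where C: "consistent_cycle E G C\<^sub>1" "O\<^sub>1 = cyc_orbit G C\<^sub>1"
    "consistent_cycle E G C\<^sub>2" "O\<^sub>2 = cyc_orbit G C\<^sub>2"
    unfolding cc_orbits_def by blast
  interpret two_cycle_orbits V E G C\<^sub>1 C\<^sub>2 using assms hyp orbits C by unfold_locales auto
  show "\<exists>F. polytopal_map V E F \<and> class_2_01 V E F \<and> map_aut V E F = G \<and> F = O\<^sub>1 \<union> O\<^sub>2"
    using polytopal_faces class_2_01_faces map_aut_faces C by blast
qed

end
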